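(* Let $G$ be a finite, simple, connected $(n-3)$-regular graph of order $n\ge 5$. Then $\gamma_P(G)=1$ if and only if there exists an edge $uv\in E(G)$ such that $|N[v]\setminus N[u]|=1$.
   Context: For $U\subseteq V(G)$, $cl(U)$ is obtained by coloring $U$ black and repeatedly applying: if a black vertex has exactly one white neighbor, that neighbor becomes black. $S$ is a power dominating set if $cl(N[S])=V(G)$; $\gamma_P(G)$ is the minimum size of a power dominating set. *)

theory Defs
  imports Main
begin

definition simple_graph :: "'a set \<Rightarrow> ('a \<Rightarrow> 'a \<Rightarrow> bool) \<Rightarrow> bool" where
  "simple_graph V E \<longleftrightarrow> finite V \<and> (\<forall>u v. E u v \<longrightarrow> u \<in> V \<and> v \<in> V) \<and>
     (\<forall>u v. E u v \<longrightarrow> E v u) \<and> (\<forall>v. \<not> E v v)"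

definition connected_graph :: "'a set \<Rightarrow> ('a \<Rightarrow> 'a \<Rightarrow> bool) \<Rightarrow> bool" where
  "connected_graph V E \<longleftrightarrow> (\<forall>u\<in>V. \<forall>v\<in>V. E\<^sup>*\<^sup>* u v)"

definition nbh :: "'a set \<Rightarrow> ('a \<Rightarrow> 'a \<Rightarrow> bool) \<Rightarrow> 'a \<Rightarrow> 'a set" where
  "nbh V E v = {u \<in> V. E v u}"

definition cnbh :: "'a set \<Rightarrow> ('a \<Rightarrow> 'a \<Rightarrow> bool) \<Rightarrow> 'a \<Rightarrow> 'a set" where
  "cnbh V E v = insert v (nbh V E v)"

definition cnbh_set :: "'a set \<Rightarrow> ('a \<Rightarrow> 'a \<Rightarrow> bool) \<Rightarrow> 'a set \<Rightarrow> 'a set" where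
  "cnbh_set V E S = (\<Union>v\<in>S. cnbh V E v)"

definition regular :: "'a set \<Rightarrow> ('a \<Rightarrow> 'a \<Rightarrow> bool) \<Rightarrow> nat \<Rightarrow> bool" where
  "regular V E k \<longleftrightarrow> (\<forall>v\<in>V. card (nbh V E v) = k)"

(* cl(U): colour U black; repeatedly, if a black vertex v has exactly one white
   neighbour w, colour w black.  Defined as the least set containing U closed
   under this propagation rule. *)
inductive_set cl :: "'a set \<Rightarrow> ('a \<Rightarrow> 'a \<Rightarrow> bool) \<Rightarrow> 'a set \<Rightarrow> 'a set"
  for V :: "'a set" and E :: "'a \<Rightarrow> 'a \<Rightarrow> bool" and U :: "'a set" where
  base: "u \<in> U \<Longrightarrow> u \<in> cl V E U"
| force: "\<lbrakk> v \<in> cl V E U; w \<in> nbh V E v; \<forall>x\<in>nbh V E v. x \<noteq> w \<longrightarrow> x \<in> cl V E U \<rbrakk>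
           \<Longrightarrow> w \<in> cl V E U"

definition power_dominating :: "'a set \<Rightarrow> ('a \<Rightarrow> 'a \<Rightarrow> bool) \<Rightarrow> 'a set \<Rightarrow> bool" where
  "power_dominating V E S \<longleftrightarrow> S \<subseteq> V \<and> cl V E (cnbh_set V E S) = V"

definition power_domination_number :: "'a set \<Rightarrow> ('a \<Rightarrow> 'a \<Rightarrow> bool) \<Rightarrow> nat" where
  "power_domination_number V E = (LEAST k. \<exists>S. power_dominating V E S \<and> card S = k)"

end

theory Submission
  imports Defs
begin

(* In an (n-3)-regular graph every closed neighbourhood N[u] misses exactly two vertices.
   A vertex u power dominates iff propagation from N[u] can start at all: a first forcing
   vertex v must lie in N(u) and have exactly one neighbour outside N[u], i.e.
   |N[v] - N[u]| = 1.  Conversely, such a v forces its private neighbour, after which a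
   single white vertex remains, and it is forced by any of its neighbours. *)

lemma simple_graph_finite: "simple_graph V E \<Longrightarrow> finite V"
  and simple_graph_edge_vertices: "simple_graph V E \<Longrightarrow> E u v \<Longrightarrow> u \<in> V \<and> v \<in> V"
  and simple_graph_sym: "simple_graph V E \<Longrightarrow> E u v \<Longrightarrow> E v u"
  and simple_graph_irrefl: "simple_graph V E \<Longrightarrow> \<not> E v v"
  unfolding simple_graph_def by blast+

lemma cnbh_subset: "u \<in> V \<Longrightarrow> cnbh V E u \<subseteq> V"
  by (auto simp: cnbh_def nbh_def)

lemma cl_subset:
  assumes "U \<subseteq> V"
  shows "cl V E U \<subseteq> V"
proof
  fix x assume "x \<in> cl V E U"
  then show "x \<in> V"
  proof induction
    case (force v w) then show ?case unfolding nbh_def by blast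
  qed (use assms in blast)
qed

lemma cl_empty [simp]: "cl V E {} = {}"
proof -
  have "x \<in> cl V E U \<Longrightarrow> U = {} \<Longrightarrow> False" for x U
    by (induction rule: cl.induct) auto
  then show ?thesis by blast
qed

lemma cl_eq_if_no_forcing:
  assumes "\<forall>x\<in>U. \<forall>w. nbh V E x - U \<noteq> {w}"
  shows "cl V E U = U"
proof
  show "cl V E U \<subseteq> U"
  proof
    fix y assume "y \<in> cl V E U"
    then show "y \<in> U"
    proof induction
      case (force v w)
      show ?case
      proof (rule ccontr)
        assume "w \<notin> U"
        with force have "nbh V E v - U = {w}" by blast
        with force.IH(1) assms show False by blast
      qed
    qed
  qed
  show "U \<subseteq> cl V E U" by (auto intro: cl.base)
qed

lemma cl_eq_if_all_but_one_observed:
  assumes sg: "simple_graph V E" and "U \<subseteq> V"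
    and observed: "V - {z} \<subseteq> cl V E U" and "nbh V E z \<noteq> {}"
  shows "cl V E U = V"
proof -
  obtain w where "w \<in> nbh V E z" using \<open>nbh V E z \<noteq> {}\<close> by blast
  then have "E z w" "w \<in> V" by (simp_all add: nbh_def)
  have "w \<noteq> z" using simple_graph_irrefl[OF sg] \<open>E z w\<close> by blast
  have "z \<in> V" "E w z"
    using simple_graph_edge_vertices[OF sg \<open>E z w\<close>] simple_graph_sym[OF sg \<open>E z w\<close>] by simp_all
  have "z \<in> cl V E U"
  proof (rule cl.force)
    show "w \<in> cl V E U" using \<open>w \<in> V\<close> \<open>w \<noteq> z\<close> observed by blast
    show "z \<in> nbh V E w" using \<open>z \<in> V\<close> \<open>E w z\<close> by (simp add: nbh_def)
    show "\<forall>x\<in>nbh V E w. x \<noteq> z \<longrightarrow> x \<in> cl V E U"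
      using observed unfolding nbh_def by blast
  qed
  with observed cl_subset[OF \<open>U \<subseteq> V\<close>] show ?thesis by blast
qed

lemma card_compl_cnbh:
  assumes sg: "simple_graph V E" and "v \<in> V"
  shows "card (V - cnbh V E v) = card V - card (nbh V E v) - 1"
proof -
  have fin: "finite V" using sg by (rule simple_graph_finite)
  have "v \<notin> nbh V E v" using simple_graph_irrefl[OF sg] by (simp add: nbh_def)
  moreover have "finite (nbh V E v)" using fin by (simp add: nbh_def)
  ultimately have "card (cnbh V E v) = Suc (card (nbh V E v))"
    unfolding cnbh_def by (rule card_insert_disjoint[rotated])
  moreover have "card (V - cnbh V E v) = card V - card (cnbh V E v)"
    using cnbh_subset[OF \<open>v \<in> V\<close>] fin by (meson card_Diff_subset finite_subset)
  ultimately show ?thesis by simp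
qed

lemma power_dominating_singleton_iff:
  "power_dominating V E {u} \<longleftrightarrow> u \<in> V \<and> cl V E (cnbh V E u) = V"
  by (simp add: power_dominating_def cnbh_set_def)

lemma power_domination_number_eq_1_iff:
  assumes "finite V" and "V \<noteq> {}"
  shows "power_domination_number V E = 1 \<longleftrightarrow> (\<exists>u\<in>V. cl V E (cnbh V E u) = V)"
proof -
  have no_empty: "\<not> power_dominating V E S" if "card S = 0" for S
  proof
    assume pd: "power_dominating V E S"
    with that \<open>finite V\<close> have "S = {}"
      by (meson card_0_eq finite_subset power_dominating_def)
    with pd \<open>V \<noteq> {}\<close> show False
      by (simp add: power_dominating_def cnbh_set_def)
  qed
  have "cnbh_set V E V = V" by (auto simp: cnbh_set_def cnbh_def nbh_def)
  moreover have "cl V E V = V" using cl_subset[of V V E] cl.base[of _ V V E] by blast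
  ultimately have "power_dominating V E V" by (simp add: power_dominating_def)
  then have "\<exists>k S. power_dominating V E S \<and> card S = k" by blast
  from LeastI_ex[OF this] have least_attained:
    "\<exists>S. power_dominating V E S \<and> card S = power_domination_number V E"
    unfolding power_domination_number_def .
  have "power_domination_number V E = 1 \<longleftrightarrow> (\<exists>S. power_dominating V E S \<and> card S = 1)"
  proof
    assume "\<exists>S. power_dominating V E S \<and> card S = 1"
    then show "power_domination_number V E = 1"
      unfolding power_domination_number_def
      by (rule Least_equality) (use no_empty in \<open>auto simp: Suc_le_eq\<close>)
  qed (use least_attained in auto)
  also have "\<dots> \<longleftrightarrow> (\<exists>u. power_dominating V E {u})"
  proof
    assume "\<exists>S. power_dominating V E S \<and> card S = 1"
    then obtain S where "power_dominating V E S" "card S = 1" by blast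
    then show "\<exists>u. power_dominating V E {u}" by (metis card_1_singletonE)
  next
    assume "\<exists>u. power_dominating V E {u}"
    then show "\<exists>S. power_dominating V E S \<and> card S = 1"
      by (metis is_singletonI is_singleton_altdef)
  qed
  also have "\<dots> \<longleftrightarrow> (\<exists>u\<in>V. cl V E (cnbh V E u) = V)"
    unfolding power_dominating_singleton_iff Bex_def ..
  finally show ?thesis .
qed

lemma exists_private_neighbour_if_forcing:
  assumes "cnbh V E u \<subset> cl V E (cnbh V E u)"
  shows "\<exists>v. E u v \<and> card (cnbh V E v - cnbh V E u) = 1"
proof (rule ccontr)
  assume none: "\<nexists>v. E u v \<and> card (cnbh V E v - cnbh V E u) = 1"
  have "\<forall>x\<in>cnbh V E u. \<forall>w. nbh V E x - cnbh V E u \<noteq> {w}"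
  proof (intro ballI allI notI)
    fix x w
    assume "x \<in> cnbh V E u" and x_private: "nbh V E x - cnbh V E u = {w}"
    then have "x \<noteq> u" by (auto simp: cnbh_def)
    with \<open>x \<in> cnbh V E u\<close> have "E u x" by (simp add: cnbh_def nbh_def)
    moreover have "cnbh V E x - cnbh V E u = {w}"
      using x_private \<open>x \<in> cnbh V E u\<close> by (auto simp: cnbh_def)
    ultimately show False using none by auto
  qed
  then have "cl V E (cnbh V E u) = cnbh V E u" by (rule cl_eq_if_no_forcing)
  with assms show False by simp
qed

lemma cl_cnbh_eq_if_private_neighbour:
  assumes sg: "simple_graph V E" and "E u v"
    and x_private: "cnbh V E v - cnbh V E u = {x}"
    and compl: "card (V - cnbh V E u) = 2"
    and no_isolated: "\<forall>z\<in>V. nbh V E z \<noteq> {}"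
  shows "cl V E (cnbh V E u) = V"
proof -
  let ?C = "cl V E (cnbh V E u)"
  have "u \<in> V" "v \<in> V" using simple_graph_edge_vertices[OF sg \<open>E u v\<close>] by auto
  then have v_dominated: "v \<in> cnbh V E u" using \<open>E u v\<close> by (simp add: cnbh_def nbh_def)
  have "x \<in> cnbh V E v" "x \<noteq> v" using x_private v_dominated by blast+
  then have x_nbh: "x \<in> nbh V E v" by (simp add: cnbh_def)
  have "nbh V E v \<subseteq> cnbh V E v" by (auto simp: cnbh_def)
  with x_private have "nbh V E v - {x} \<subseteq> cnbh V E u" by blast
  then have "x \<in> ?C"
    by (intro cl.force[OF cl.base[OF v_dominated] x_nbh] ballI impI cl.base) blast
  moreover have "x \<in> V - cnbh V E u" using x_private x_nbh unfolding nbh_def by blast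
  moreover obtain z where "z \<in> V" "V - cnbh V E u \<subseteq> {x, z}"
  proof -
    obtain a b where ab: "V - cnbh V E u = {a, b}"
      using compl unfolding card_2_iff by blast
    show thesis
    proof (cases "x = a")
      case True
      with ab show thesis by (intro that[of b]) auto
    next
      case False
      with ab \<open>x \<in> V - cnbh V E u\<close> show thesis by (intro that[of a]) auto
    qed
  qed
  ultimately have "V - {z} \<subseteq> ?C" by (blast intro: cl.base)
  with cnbh_subset[OF \<open>u \<in> V\<close>] show ?thesis
    using cl_eq_if_all_but_one_observed[OF sg] no_isolated \<open>z \<in> V\<close> by simp
qed

theorem mainTheorem8:
  fixes V :: "'a set" and E :: "'a \<Rightarrow> 'a \<Rightarrow> bool"
  assumes "simple_graph V E"
    and "connected_graph V E"
    and "card V \<ge> 5"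
    and "regular V E (card V - 3)"
  shows "power_domination_number V E = 1 \<longleftrightarrow>
         (\<exists>u v. E u v \<and> card (cnbh V E v - cnbh V E u) = 1)"
proof -
  note sg = assms(1)
  have compl: "card (V - cnbh V E u) = 2" if "u \<in> V" for u
    using card_compl_cnbh[OF sg that] assms(3,4) that by (simp add: regular_def)
  have no_isolated: "\<forall>z\<in>V. nbh V E z \<noteq> {}"
    using assms(3,4) by (auto simp: regular_def)
  have "finite V" "V \<noteq> {}" using simple_graph_finite[OF sg] assms(3) by auto
  then have "power_domination_number V E = 1 \<longleftrightarrow> (\<exists>u\<in>V. cl V E (cnbh V E u) = V)"
    by (rule power_domination_number_eq_1_iff)
  also have "\<dots> \<longleftrightarrow> (\<exists>u v. E u v \<and> card (cnbh V E v - cnbh V E u) = 1)"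
  proof
    assume "\<exists>u\<in>V. cl V E (cnbh V E u) = V"
    then obtain u where "u \<in> V" and dominates: "cl V E (cnbh V E u) = V" by blast
    have "V - cnbh V E u \<noteq> {}"
      using compl[OF \<open>u \<in> V\<close>] by (metis card.empty zero_neq_numeral)
    with cnbh_subset[OF \<open>u \<in> V\<close>] have "cnbh V E u \<subset> cl V E (cnbh V E u)"
      unfolding dominates by blast
    from exists_private_neighbour_if_forcing[OF this]
    show "\<exists>u v. E u v \<and> card (cnbh V E v - cnbh V E u) = 1" by blast
  next
    assume "\<exists>u v. E u v \<and> card (cnbh V E v - cnbh V E u) = 1"
    then obtain u v where "E u v" and "card (cnbh V E v - cnbh V E u) = 1" by blast
    moreover from this(2) obtain x where "cnbh V E v - cnbh V E u = {x}"
      by (rule card_1_singletonE)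
    moreover have "u \<in> V" using simple_graph_edge_vertices[OF sg \<open>E u v\<close>] by blast
    ultimately show "\<exists>u\<in>V. cl V E (cnbh V E u) = V"
      using cl_cnbh_eq_if_private_neighbour[OF sg] compl no_isolated by blast
  qed
  finally show ?thesis .
qed

end
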